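(* Let $P$ be a section of width three. The following are equivalent: (1) $P$ is nice; (2) $P$ contains no retractable point; (3) $P$ contains no irreducible point.
   Context: All posets are finite. Level sets: $P(0)=\min P$, $P(k+1)=\min(P\setminus\bigcup_{i\le k}P(i))$. A section of width three is a poset $P$ of height $h_P\ge1$ with carrier $\{c_{k,j}:k\in[0,h_P],j\in\{0,1,2\}\}$ such that: $c_{0,j}<\dots<c_{h_P,j}$ is a chain for each $j$; each $\{c_{k,0},c_{k,1},c_{k,2}\}$ is an antichain; $c_{k,i}<c_{\ell,j}\Rightarrow c_{k,i+1}<c_{\ell,j+1}$ for all $k,\ell,i,j$ (indices mod 3); and for no $k$ is every point of $P(k)$ below every point of $P(k+1)$. It is nice if for all $x<y$ in $P$: $\{z:z>x\}\not\subseteq\{z:z\ge y\}$ and $\{z:z<y\}\not\subseteq\{z:z\le x\}$. A point $a\in P$ is retractable if $P\setminus\{a\}$ is a retract of $P$ (image of an idempotent order-preserving self-map). A point is irreducible if it has exactly one lower cover or exactly one upper cover. *)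

theory Defs
  imports Main
begin

definition poset_on :: "'a set \<Rightarrow> ('a \<Rightarrow> 'a \<Rightarrow> bool) \<Rightarrow> bool" where
  "poset_on P le \<longleftrightarrow> finite P \<and>
     (\<forall>x\<in>P. le x x) \<and>
     (\<forall>x\<in>P. \<forall>y\<in>P. le x y \<and> le y x \<longrightarrow> x = y) \<and>
     (\<forall>x\<in>P. \<forall>y\<in>P. \<forall>z\<in>P. le x y \<and> le y z \<longrightarrow> le x z)"

definition lt :: "('a \<Rightarrow> 'a \<Rightarrow> bool) \<Rightarrow> 'a \<Rightarrow> 'a \<Rightarrow> bool" where
  "lt le x y \<longleftrightarrow> le x y \<and> x \<noteq> y"

definition minimals :: "('a \<Rightarrow> 'a \<Rightarrow> bool) \<Rightarrow> 'a set \<Rightarrow> 'a set" where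
  "minimals le S = {x \<in> S. \<not> (\<exists>y\<in>S. lt le y x)}"

text \<open>rest P le k = P minus the union of the levels P(0),...,P(k-1).\<close>
fun rest :: "'a set \<Rightarrow> ('a \<Rightarrow> 'a \<Rightarrow> bool) \<Rightarrow> nat \<Rightarrow> 'a set" where
  "rest P le 0 = P"
| "rest P le (Suc k) = rest P le k - minimals le (rest P le k)"

definition level :: "'a set \<Rightarrow> ('a \<Rightarrow> 'a \<Rightarrow> bool) \<Rightarrow> nat \<Rightarrow> 'a set" where
  "level P le k = minimals le (rest P le k)"

definition section3 :: "'a set \<Rightarrow> ('a \<Rightarrow> 'a \<Rightarrow> bool) \<Rightarrow> nat \<Rightarrow> (nat \<Rightarrow> nat \<Rightarrow> 'a) \<Rightarrow> bool" where
  "section3 P le h c \<longleftrightarrow>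
     poset_on P le \<and> h \<ge> 1 \<and>
     P = {c k j | k j. k \<le> h \<and> j < 3} \<and>
     (\<forall>k<h. \<forall>j<3. lt le (c k j) (c (Suc k) j)) \<and>
     (\<forall>k\<le>h. \<forall>i<3. \<forall>j<3. i \<noteq> j \<longrightarrow> \<not> le (c k i) (c k j)) \<and>
     (\<forall>k\<le>h. \<forall>l\<le>h. \<forall>i<3. \<forall>j<3.
        lt le (c k i) (c l j) \<longrightarrow> lt le (c k ((i + 1) mod 3)) (c l ((j + 1) mod 3))) \<and>
     (\<forall>k<h. \<not> (\<forall>x\<in>level P le k. \<forall>y\<in>level P le (Suc k). lt le x y))"

definition nice :: "'a set \<Rightarrow> ('a \<Rightarrow> 'a \<Rightarrow> bool) \<Rightarrow> bool" where
  "nice P le \<longleftrightarrow> (\<forall>x\<in>P. \<forall>y\<in>P. lt le x y \<longrightarrow>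
      \<not> ({z\<in>P. lt le x z} \<subseteq> {z\<in>P. le y z}) \<and>
      \<not> ({z\<in>P. lt le z y} \<subseteq> {z\<in>P. le z x}))"

definition retractable :: "'a set \<Rightarrow> ('a \<Rightarrow> 'a \<Rightarrow> bool) \<Rightarrow> 'a \<Rightarrow> bool" where
  "retractable P le a \<longleftrightarrow> (\<exists>r. (\<forall>x\<in>P. r x \<in> P) \<and>
      (\<forall>x\<in>P. \<forall>y\<in>P. le x y \<longrightarrow> le (r x) (r y)) \<and>
      (\<forall>x\<in>P. r (r x) = r x) \<and>
      r ` P = P - {a})"

definition lower_covers :: "'a set \<Rightarrow> ('a \<Rightarrow> 'a \<Rightarrow> bool) \<Rightarrow> 'a \<Rightarrow> 'a set" where
  "lower_covers P le x = {y\<in>P. lt le y x \<and> \<not> (\<exists>z\<in>P. lt le y z \<and> lt le z x)}"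

definition upper_covers :: "'a set \<Rightarrow> ('a \<Rightarrow> 'a \<Rightarrow> bool) \<Rightarrow> 'a \<Rightarrow> 'a set" where
  "upper_covers P le x = {y\<in>P. lt le x y \<and> \<not> (\<exists>z\<in>P. lt le x z \<and> lt le z y)}"

definition irreducible_pt :: "'a set \<Rightarrow> ('a \<Rightarrow> 'a \<Rightarrow> bool) \<Rightarrow> 'a \<Rightarrow> bool" where
  "irreducible_pt P le a \<longleftrightarrow> card (lower_covers P le a) = 1 \<or> card (upper_covers P le a) = 1"

end

theory Submission
  imports Defs
begin

text \<open>A point \<open>a\<close> is retractable iff some \<open>b \<noteq> a\<close> (a substitute for \<open>a\<close>) lies above every
  point strictly below \<open>a\<close> and below every point strictly above \<open>a\<close>: the retraction sends \<open>a\<close>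
  to \<open>b\<close>. A unique upper or lower cover of \<open>a\<close> is a substitute, so irreducible points are
  retractable; and a pair \<open>x < y\<close> witnessing that \<open>P\<close> is not nice makes \<open>y\<close> the unique upper
  cover of \<open>x\<close> or \<open>x\<close> the unique lower cover of \<open>y\<close>. Conversely, niceness rules out
  substitutes comparable with \<open>a\<close>. In a section, an incomparable substitute \<open>b\<close> lies in the
  row of \<open>a\<close> and, like \<open>a\<close>, below the successor of \<open>a\<close> on its chain (above its predecessor
  if \<open>a\<close> is in the top row). The rotational symmetry of the section turns these two
  comparabilities into all comparabilities between two consecutive rows, so every point of
  one level would lie below every point of the next.\<close>

definition substitute_for :: "'a set \<Rightarrow> ('a \<Rightarrow> 'a \<Rightarrow> bool) \<Rightarrow> 'a \<Rightarrow> 'a \<Rightarrow> bool" where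
  "substitute_for P le b a \<longleftrightarrow> b \<in> P \<and> b \<noteq> a \<and>
     (\<forall>z\<in>P. lt le a z \<longrightarrow> le b z) \<and> (\<forall>z\<in>P. lt le z a \<longrightarrow> le z b)"

lemma niceD:
  assumes "nice P le" "x \<in> P" "y \<in> P" "lt le x y"
  shows "\<not> {z\<in>P. lt le x z} \<subseteq> {z\<in>P. le y z}" "\<not> {z\<in>P. lt le z y} \<subseteq> {z\<in>P. le z x}"
  using assms unfolding nice_def by simp_all

locale finite_poset =
  fixes P :: "'a set" and le :: "'a \<Rightarrow> 'a \<Rightarrow> bool"
  assumes poset: "poset_on P le"
begin

lemma finite_carrier: "finite P"
  using poset unfolding poset_on_def by blast

lemma poset_refl: "x \<in> P \<Longrightarrow> le x x"
  using poset unfolding poset_on_def by blast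

lemma poset_antisym: "\<lbrakk>x \<in> P; y \<in> P; le x y; le y x\<rbrakk> \<Longrightarrow> x = y"
  using poset unfolding poset_on_def by blast

lemma poset_trans: "\<lbrakk>x \<in> P; y \<in> P; z \<in> P; le x y; le y z\<rbrakk> \<Longrightarrow> le x z"
  using poset unfolding poset_on_def by blast

lemma poset_less_trans: "\<lbrakk>x \<in> P; y \<in> P; z \<in> P; lt le x y; lt le y z\<rbrakk> \<Longrightarrow> lt le x z"
  unfolding lt_def by (metis poset_trans poset_antisym)

lemma poset_le_less_trans: "\<lbrakk>x \<in> P; y \<in> P; z \<in> P; le x y; lt le y z\<rbrakk> \<Longrightarrow> lt le x z"
  unfolding lt_def by (metis poset_trans poset_antisym)

lemma ex_minimal:
  assumes "S \<subseteq> P" and "y \<in> S"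
  shows "\<exists>u\<in>S. \<forall>w\<in>S. \<not> lt le w u"
proof -
  define m where "m u = card {x\<in>P. lt le x u}" for u
  obtain u where u: "u \<in> S" and u_least: "\<And>v. v \<in> S \<Longrightarrow> m u \<le> m v"
    using ex_has_least_nat[of "\<lambda>u. u \<in> S" y m] \<open>y \<in> S\<close> by blast
  have "\<not> lt le w u" if w: "w \<in> S" for w
  proof
    assume wu: "lt le w u"
    have wP: "w \<in> P" and uP: "u \<in> P" using w u \<open>S \<subseteq> P\<close> by auto
    have "{x\<in>P. lt le x w} \<subseteq> {x\<in>P. lt le x u}"
      using poset_less_trans[OF _ wP uP] wu by blast
    moreover have "w \<in> {x\<in>P. lt le x u} - {x\<in>P. lt le x w}"
      using wu wP by (simp add: lt_def)
    ultimately have "{x\<in>P. lt le x w} \<subset> {x\<in>P. lt le x u}" by blast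
    then have "m w < m u"
      unfolding m_def using finite_carrier by (simp add: psubset_card_mono)
    with u_least[OF w] show False by simp
  qed
  with u show ?thesis by blast
qed

lemma ex_upper_cover_below:
  assumes "a \<in> P" "y \<in> P" "lt le a y"
  shows "\<exists>u\<in>upper_covers P le a. le u y"
proof -
  let ?S = "{z\<in>P. lt le a z \<and> le z y}"
  have "y \<in> ?S" using assms poset_refl by auto
  then obtain u where u: "u \<in> ?S" and u_min: "\<forall>w\<in>?S. \<not> lt le w u"
    using ex_minimal[of ?S] by blast
  have "u \<in> upper_covers P le a"
    unfolding upper_covers_def
  proof (safe)
    show "u \<in> P" "lt le a u" using u by auto
    fix z assume "z \<in> P" "lt le a z" "lt le z u"
    then have "z \<in> ?S" using poset_trans[of z u y] u \<open>y \<in> P\<close> by (auto simp: lt_def)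
    with u_min \<open>lt le z u\<close> show False by blast
  qed
  with u show ?thesis by blast
qed

lemma upper_covers_eq_singleton:
  assumes "x \<in> P" "y \<in> P" "lt le x y" and above: "{z\<in>P. lt le x z} \<subseteq> {z\<in>P. le y z}"
  shows "upper_covers P le x = {y}"
proof -
  have "u = y" if "u \<in> upper_covers P le x" for u
    using that above assms unfolding upper_covers_def lt_def by blast
  moreover have "y \<in> upper_covers P le x"
    using assms poset_antisym unfolding upper_covers_def lt_def by blast
  ultimately show ?thesis by blast
qed

lemma lower_covers_eq_singleton:
  assumes "x \<in> P" "y \<in> P" "lt le x y" and below: "{z\<in>P. lt le z y} \<subseteq> {z\<in>P. le z x}"
  shows "lower_covers P le y = {x}"
proof -
  have "u = x" if "u \<in> lower_covers P le y" for u
    using that below assms unfolding lower_covers_def lt_def by blast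
  moreover have "x \<in> lower_covers P le y"
    using assms poset_antisym unfolding lower_covers_def lt_def by blast
  ultimately show ?thesis by blast
qed

lemma substitute_if_upper_covers_eq:
  assumes "a \<in> P" and covers: "upper_covers P le a = {b}"
  shows "substitute_for P le b a"
proof -
  have b: "b \<in> P" "lt le a b" using covers unfolding upper_covers_def by auto
  have "le b z" if "z \<in> P" "lt le a z" for z
    using ex_upper_cover_below[OF \<open>a \<in> P\<close> that] covers by simp
  moreover have "le z b" if "z \<in> P" "lt le z a" for z
    using poset_trans[OF that(1) \<open>a \<in> P\<close> b(1)] that b by (simp add: lt_def)
  ultimately show ?thesis
    using b unfolding substitute_for_def lt_def by blast
qed

lemma retractable_iff_substitute:
  assumes "a \<in> P"
  shows "retractable P le a \<longleftrightarrow> (\<exists>b. substitute_for P le b a)"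
proof
  assume "retractable P le a"
  then obtain r where r_mono: "\<forall>x\<in>P. \<forall>y\<in>P. le x y \<longrightarrow> le (r x) (r y)"
    and r_idem: "\<forall>x\<in>P. r (r x) = r x" and r_image: "r ` P = P - {a}"
    unfolding retractable_def by blast
  have fixed: "r z = z" if "z \<in> P" "z \<noteq> a" for z
    using that r_image r_idem by (metis DiffI imageE singletonD)
  have "le (r a) z" if "z \<in> P" "lt le a z" for z
    using r_mono assms that fixed[of z] by (force simp: lt_def)
  moreover have "le z (r a)" if "z \<in> P" "lt le z a" for z
    using r_mono assms that fixed[of z] by (force simp: lt_def)
  moreover have "r a \<in> P - {a}"
    using assms r_image by blast
  ultimately have "substitute_for P le (r a) a"
    unfolding substitute_for_def by blast
  then show "\<exists>b. substitute_for P le b a" ..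
next
  assume "\<exists>b. substitute_for P le b a"
  then obtain b where b: "b \<in> P" "b \<noteq> a"
    and above: "\<forall>z\<in>P. lt le a z \<longrightarrow> le b z" and below: "\<forall>z\<in>P. lt le z a \<longrightarrow> le z b"
    unfolding substitute_for_def by blast
  define r where "r x = (if x = a then b else x)" for x
  have "le (r x) (r y)" if "x \<in> P" "y \<in> P" "le x y" for x y
    using that b above below poset_refl unfolding r_def lt_def by auto
  moreover have "r ` P = P - {a}"
    using b unfolding r_def by (auto simp: image_iff)
  ultimately show "retractable P le a"
    unfolding retractable_def using b by (intro exI[of _ r]) (auto simp: r_def)
qed

end

lemma finite_poset_dual: "finite_poset P le \<Longrightarrow> finite_poset P (\<lambda>x y. le y x)"
  unfolding finite_poset_def poset_on_def by blast

text \<open>These duality equations must not be used as simplification rules: their left-hand sides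
  also match the undualized terms (take the dual of \<open>le\<close> for \<open>le\<close>), so the simplifier loops.\<close>
lemma upper_covers_dual: "upper_covers P (\<lambda>x y. le y x) a = lower_covers P le a"
  unfolding lower_covers_def upper_covers_def lt_def by blast

lemma substitute_for_dual: "substitute_for P (\<lambda>x y. le y x) b a = substitute_for P le b a"
  unfolding substitute_for_def lt_def by blast

context finite_poset
begin

interpretation dual: finite_poset P "\<lambda>x y. le y x"
  by (rule finite_poset_dual) (rule finite_poset_axioms)

lemma retractable_if_irreducible:
  assumes "a \<in> P" "irreducible_pt P le a"
  shows "retractable P le a"
proof -
  from assms(2) consider "card (upper_covers P le a) = 1" | "card (lower_covers P le a) = 1"
    unfolding irreducible_pt_def by blast
  then obtain b where "substitute_for P le b a"
  proof cases
    case 1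
    then obtain b where "upper_covers P le a = {b}" by (rule card_1_singletonE)
    with assms(1) that show ?thesis by (blast intro: substitute_if_upper_covers_eq)
  next
    case 2
    then obtain b where "lower_covers P le a = {b}" by (rule card_1_singletonE)
    then have "upper_covers P (\<lambda>x y. le y x) a = {b}"
      by (subst upper_covers_dual)
    then have "substitute_for P (\<lambda>x y. le y x) b a"
      by (rule dual.substitute_if_upper_covers_eq[OF assms(1)])
    with that show ?thesis by (simp only: substitute_for_dual[of P le b a])
  qed
  then show ?thesis using retractable_iff_substitute[OF assms(1)] by blast
qed

lemma irreducible_if_not_nice:
  assumes "\<not> nice P le"
  shows "\<exists>a\<in>P. irreducible_pt P le a"
proof -
  obtain x y where xy: "x \<in> P" "y \<in> P" "lt le x y" and
    "{z\<in>P. lt le x z} \<subseteq> {z\<in>P. le y z} \<or> {z\<in>P. lt le z y} \<subseteq> {z\<in>P. le z x}"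
    using assms unfolding nice_def by blast
  then consider "upper_covers P le x = {y}" | "lower_covers P le y = {x}"
    using upper_covers_eq_singleton lower_covers_eq_singleton by blast
  then show ?thesis
  proof cases
    case 1
    then show ?thesis
      using xy(1) unfolding irreducible_pt_def by (intro bexI[of _ x]) simp_all
  next
    case 2
    then show ?thesis
      using xy(2) unfolding irreducible_pt_def by (intro bexI[of _ y]) simp_all
  qed
qed

lemma substitute_incomparable_if_nice:
  assumes "nice P le" "a \<in> P" "substitute_for P le b a"
  shows "\<not> le a b \<and> \<not> le b a"
proof -
  from assms(3) have b: "b \<in> P" "b \<noteq> a"
    and above: "{z\<in>P. lt le a z} \<subseteq> {z\<in>P. le b z}"
    and below: "{z\<in>P. lt le z a} \<subseteq> {z\<in>P. le z b}"
    unfolding substitute_for_def by auto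
  show ?thesis
  proof (intro conjI notI)
    assume "le a b"
    with b have "lt le a b" by (simp add: lt_def)
    from niceD(1)[OF assms(1,2) b(1) this] above show False ..
  next
    assume "le b a"
    with b have "lt le b a" by (simp add: lt_def)
    from niceD(2)[OF assms(1) b(1) assms(2) this] below show False ..
  qed
qed

end

lemma less_3_iff: "n < 3 \<longleftrightarrow> n = 0 \<or> n = 1 \<or> n = (2::nat)"
  by auto

lemma shifts_cover_mod3:
  fixes x y x' y' m m' :: nat
  assumes "x < 3" "y < 3" "x' < 3" "y' < 3" "m < 3" "m' < 3" "x \<noteq> y"
    and "(y' + 2 * x) mod 3 = (2 * y + x') mod 3"
  shows "m = m' \<or> (y + m) mod 3 = (m' + x) mod 3 \<or> (y' + m) mod 3 = (m' + x') mod 3"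
  using assms unfolding less_3_iff by (elim disjE) simp_all

locale width_three_section =
  fixes P :: "'a set" and le :: "'a \<Rightarrow> 'a \<Rightarrow> bool" and h :: nat and c :: "nat \<Rightarrow> nat \<Rightarrow> 'a"
  assumes sec: "section3 P le h c"

sublocale width_three_section \<subseteq> finite_poset P le
proof
  show "poset_on P le" using sec unfolding section3_def by (elim conjE)
qed

context width_three_section
begin

lemma height_pos: "1 \<le> h"
  using sec unfolding section3_def by (elim conjE)

lemma carrier_eq: "P = {c k j | k j. k \<le> h \<and> j < 3}"
  using sec unfolding section3_def by (elim conjE)

lemma chain_step [rule_format]: "\<forall>k<h. \<forall>j<3. lt le (c k j) (c (Suc k) j)"
  using sec unfolding section3_def by (elim conjE)

lemma row_antichain [rule_format]: "\<forall>k\<le>h. \<forall>i<3. \<forall>j<3. i \<noteq> j \<longrightarrow> \<not> le (c k i) (c k j)"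
  using sec unfolding section3_def by (elim conjE)

lemma rotate_succ [rule_format]:
  "\<forall>k\<le>h. \<forall>l\<le>h. \<forall>i<3. \<forall>j<3.
     lt le (c k i) (c l j) \<longrightarrow> lt le (c k ((i + 1) mod 3)) (c l ((j + 1) mod 3))"
  using sec unfolding section3_def by (elim conjE)

lemma consecutive_levels_incomplete [rule_format]:
  "\<forall>k<h. \<not> (\<forall>x\<in>level P le k. \<forall>y\<in>level P le (Suc k). lt le x y)"
  using sec unfolding section3_def by (elim conjE)

lemma point_in_carrier: "k \<le> h \<Longrightarrow> j < 3 \<Longrightarrow> c k j \<in> P"
  using carrier_eq by blast

lemma carrier_cases:
  assumes "x \<in> P"
  obtains k j where "k \<le> h" "j < 3" "x = c k j"
  using assms carrier_eq by blast

lemma chain_le: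
  assumes "k \<le> l" "l \<le> h" "j < 3"
  shows "le (c k j) (c l j)"
  using assms(1,2)
proof (induction l rule: dec_induct)
  case base
  then show ?case using assms(3) by (simp add: poset_refl point_in_carrier)
next
  case (step n)
  then have "le (c k j) (c n j)" "le (c n j) (c (Suc n) j)"
    using chain_step[of n j] assms(3) by (simp_all add: lt_def)
  moreover have "c k j \<in> P" "c n j \<in> P" "c (Suc n) j \<in> P"
    using step assms(3) by (simp_all add: point_in_carrier)
  ultimately show ?case by (metis poset_trans)
qed

lemma chain_less:
  assumes "k < l" "l \<le> h" "j < 3"
  shows "lt le (c k j) (c l j)"
proof -
  obtain m where l: "l = Suc m" using assms(1) by (cases l) auto
  have "le (c k j) (c m j)" using chain_le[of k m j] assms l by simp
  moreover have "lt le (c m j) (c l j)" using chain_step[of m j] assms l by simp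
  moreover have "c k j \<in> P" "c m j \<in> P" "c l j \<in> P"
    using assms l by (simp_all add: point_in_carrier)
  ultimately show ?thesis by (metis poset_le_less_trans)
qed

lemma index_less_if_less:
  assumes "lt le (c k i) (c l j)" "k \<le> h" "l \<le> h" "i < 3" "j < 3"
  shows "k < l"
proof (rule ccontr)
  assume "\<not> k < l"
  then have "le (c l i) (c k i)" using chain_le assms by simp
  then have "lt le (c l i) (c l j)"
    using poset_le_less_trans point_in_carrier assms by blast
  then show False
    using row_antichain[of l i j] assms by (cases "i = j") (auto simp: lt_def)
qed

lemma index_inj:
  assumes "c k i = c l j" "k \<le> h" "l \<le> h" "i < 3" "j < 3"
  shows "k = l \<and> i = j"
proof -
  have "\<not> k < l"
  proof
    assume "k < l"
    then have "lt le (c k j) (c k i)" using chain_less assms by metis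
    then show False using index_less_if_less assms by blast
  qed
  moreover have "\<not> l < k"
  proof
    assume "l < k"
    then have "lt le (c l i) (c l j)" using chain_less assms by metis
    then show False using index_less_if_less assms by blast
  qed
  ultimately have "k = l" by simp
  moreover have "i = j"
    using row_antichain[of k i j] poset_refl point_in_carrier assms \<open>k = l\<close> by metis
  ultimately show ?thesis ..
qed

lemma rotate_by:
  assumes "lt le (c k i) (c l j)" "k \<le> h" "l \<le> h" "i < 3" "j < 3"
  shows "lt le (c k ((i + d) mod 3)) (c l ((j + d) mod 3))"
proof (induction d)
  case 0
  then show ?case using assms by simp
next
  case (Suc d)
  then show ?case
    using rotate_succ[OF assms(2,3) _ _ Suc] by (simp add: mod_Suc_eq)
qed

text \<open>The comparabilities between two rows depend only on the difference of the column
  indices modulo 3.\<close>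
lemma rotate:
  assumes "lt le (c k x) (c l y)" "k \<le> h" "l \<le> h" "x < 3" "y < 3" "m < 3" "m' < 3"
    and "(y + m) mod 3 = (m' + x) mod 3"
  shows "lt le (c k m) (c l m')"
proof -
  have "(x + (m + 3 - x)) mod 3 = m \<and> (y + (m + 3 - x)) mod 3 = m'"
    using assms(4-8) unfolding less_3_iff by (elim disjE) simp_all
  then show ?thesis using rotate_by[OF assms(1-5), of "m + 3 - x"] by simp
qed

definition row :: "nat \<Rightarrow> 'a set" where
  "row k = {c k j | j. j < 3}"

definition rows_from :: "nat \<Rightarrow> 'a set" where
  "rows_from k = {c l j | l j. k \<le> l \<and> l \<le> h \<and> j < 3}"

lemma minimals_rows_from:
  assumes "k \<le> h"
  shows "minimals le (rows_from k) = row k"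
proof
  show "minimals le (rows_from k) \<subseteq> row k"
  proof
    fix x assume "x \<in> minimals le (rows_from k)"
    then obtain l j where l: "k \<le> l" "l \<le> h" "j < 3" "x = c l j"
      and no_below: "\<forall>y\<in>rows_from k. \<not> lt le y x"
      unfolding minimals_def rows_from_def by blast
    have "l = k"
    proof (rule ccontr)
      assume "l \<noteq> k"
      then have "lt le (c k j) x" using chain_less[of k l j] l by simp
      moreover have "c k j \<in> rows_from k" using assms l unfolding rows_from_def by blast
      ultimately show False using no_below by blast
    qed
    then show "x \<in> row k" using l unfolding row_def by blast
  qed
next
  show "row k \<subseteq> minimals le (rows_from k)"
  proof
    fix x assume "x \<in> row k"
    then obtain j where j: "j < 3" "x = c k j" unfolding row_def by blast
    have "\<not> lt le y x" if y: "y \<in> rows_from k" for y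
    proof
      assume "lt le y x"
      obtain l j' where "k \<le> l" "l \<le> h" "j' < 3" "y = c l j'"
        using y unfolding rows_from_def by blast
      with \<open>lt le y x\<close> j assms have "l < k" using index_less_if_less[of l j' k j] by simp
      with \<open>k \<le> l\<close> show False by simp
    qed
    moreover have "x \<in> rows_from k" using j assms unfolding rows_from_def by blast
    ultimately show "x \<in> minimals le (rows_from k)" unfolding minimals_def by blast
  qed
qed

lemma rows_from_Suc: "rows_from (Suc k) = rows_from k - row k"
proof
  show "rows_from (Suc k) \<subseteq> rows_from k - row k"
  proof
    fix x assume "x \<in> rows_from (Suc k)"
    then obtain l j where l: "Suc k \<le> l" "l \<le> h" "j < 3" "x = c l j"
      unfolding rows_from_def by blast
    have "x \<notin> row k"
    proof
      assume "x \<in> row k"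
      then obtain j' where "j' < 3" "x = c k j'" unfolding row_def by blast
      then have "l = k" using index_inj[of l j k j'] l by simp
      with l show False by simp
    qed
    moreover have "x \<in> rows_from k" using l unfolding rows_from_def by force
    ultimately show "x \<in> rows_from k - row k" by blast
  qed
  show "rows_from k - row k \<subseteq> rows_from (Suc k)"
  proof
    fix x assume x: "x \<in> rows_from k - row k"
    then obtain l j where l: "k \<le> l" "l \<le> h" "j < 3" "x = c l j"
      unfolding rows_from_def by blast
    moreover have "l \<noteq> k" using x l unfolding row_def by blast
    ultimately show "x \<in> rows_from (Suc k)" unfolding rows_from_def by force
  qed
qed

lemma level_eq_row:
  assumes "k \<le> h"
  shows "level P le k = row k"
proof -
  have "rest P le k = rows_from k"
    using assms
  proof (induction k)
    case 0
    then show ?case using carrier_eq unfolding rows_from_def by simp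
  next
    case (Suc k)
    then show ?case using minimals_rows_from rows_from_Suc by simp
  qed
  then show ?thesis using minimals_rows_from[OF assms] unfolding level_def by simp
qed

lemma consecutive_rows_incomplete:
  assumes "k < h"
  obtains m m' where "m < 3" "m' < 3" "\<not> lt le (c k m) (c (Suc k) m')"
proof -
  from consecutive_levels_incomplete[OF assms] obtain x y
    where "x \<in> row k" "y \<in> row (Suc k)" "\<not> lt le x y"
    using level_eq_row assms by auto
  then show thesis using that unfolding row_def by blast
qed

text \<open>Together with the chains (shift 0), comparabilities between consecutive rows with
  column shifts \<open>d \<noteq> 0\<close> and \<open>2d\<close> would realize every shift.\<close>
lemma no_shifts_d_and_2d:
  assumes "k < h" "x < 3" "y < 3" "x' < 3" "y' < 3" "x \<noteq> y"
    and "(y' + 2 * x) mod 3 = (2 * y + x') mod 3"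
    and "lt le (c k x) (c (Suc k) y)" "lt le (c k x') (c (Suc k) y')"
  shows False
proof -
  obtain m m' where m: "m < 3" "m' < 3" and not_lt: "\<not> lt le (c k m) (c (Suc k) m')"
    using consecutive_rows_incomplete[OF assms(1)] .
  have kh: "k \<le> h" "Suc k \<le> h" using assms(1) by simp_all
  from shifts_cover_mod3[OF assms(2-5) m assms(6,7)]
  have "lt le (c k m) (c (Suc k) m')"
    using chain_step[OF assms(1)] rotate[OF assms(8) kh assms(2,3) m]
      rotate[OF assms(9) kh assms(4,5) m] m by blast
  with not_lt show False ..
qed

lemma no_strict_substitute_below_top:
  assumes "k < h" "i < 3" "l \<le> h" "j < 3" "c l j \<noteq> c k i"
    and above: "\<And>z. \<lbrakk>z \<in> P; lt le (c k i) z\<rbrakk> \<Longrightarrow> lt le (c l j) z"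
    and below: "\<And>z. \<lbrakk>z \<in> P; lt le z (c k i)\<rbrakk> \<Longrightarrow> lt le z (c l j)"
  shows False
proof -
  have p: "lt le (c l j) (c (Suc k) i)"
    using above chain_step point_in_carrier assms(1,2) by simp
  have "k \<le> l"
  proof (cases k)
    case (Suc k0)
    have "lt le (c k0 i) (c l j)"
      using below chain_step[of k0 i] point_in_carrier Suc assms(1,2) by simp
    then show ?thesis using index_less_if_less Suc assms by fastforce
  qed simp
  with index_less_if_less[OF p] assms have "l = k" by fastforce
  with assms(5) have "j \<noteq> i" by blast
  define i' where "i' = (2 * i + 3 - j) mod 3"
  have i': "i' < 3" "(i + i) mod 3 = (i' + j) mod 3" "(i' + 2 * j) mod 3 = (2 * i + j) mod 3"
    using assms(2,4) unfolding i'_def less_3_iff by (elim disjE; simp)+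
  have "lt le (c k i) (c (Suc k) i')"
    using rotate[OF p] \<open>l = k\<close> assms(1-4) i' by simp
  then have q: "lt le (c k j) (c (Suc k) i')"
    using above point_in_carrier assms(1) i'(1) \<open>l = k\<close> by simp
  show False
    using no_shifts_d_and_2d[of k j i j i'] assms(1,2,4) p q i' \<open>j \<noteq> i\<close> \<open>l = k\<close> by simp
qed

lemma no_strict_substitute_in_top_row:
  assumes "h = Suc k" "i < 3" "l \<le> h" "j < 3" "c l j \<noteq> c h i"
    and below: "\<And>z. \<lbrakk>z \<in> P; lt le z (c h i)\<rbrakk> \<Longrightarrow> lt le z (c l j)"
  shows False
proof -
  have p: "lt le (c k i) (c l j)"
    using below chain_step[of k i] point_in_carrier assms(1,2) by simp
  then have "l = Suc k" using index_less_if_less assms by fastforce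
  with assms(1,5) have "j \<noteq> i" by blast
  define i' where "i' = (2 * i + 3 - j) mod 3"
  have i': "i' < 3" "(j + i') mod 3 = (i + i) mod 3" "(j + 2 * i) mod 3 = (2 * j + i') mod 3"
    using assms(2,4) unfolding i'_def less_3_iff by (elim disjE; simp)+
  have "lt le (c k i') (c (Suc k) i)"
    using rotate[OF p] \<open>l = Suc k\<close> assms(1-4) i' by simp
  then have q: "lt le (c k i') (c (Suc k) j)"
    using below point_in_carrier assms(1) i'(1) \<open>l = Suc k\<close> by simp
  show False
    using no_shifts_d_and_2d[of k i j i' j] assms(1,2,4) p q i' \<open>j \<noteq> i\<close> \<open>l = Suc k\<close> by simp
qed

lemma no_incomparable_substitute:
  assumes "a \<in> P" "substitute_for P le b a" "\<not> le a b" "\<not> le b a"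
  shows False
proof -
  obtain k i where k: "k \<le> h" "i < 3" and a: "a = c k i"
    using carrier_cases[OF assms(1)] by blast
  from assms(2) have "b \<in> P" and "b \<noteq> a"
    and le_above: "\<forall>z\<in>P. lt le a z \<longrightarrow> le b z" and le_below: "\<forall>z\<in>P. lt le z a \<longrightarrow> le z b"
    unfolding substitute_for_def by blast+
  obtain l j where l: "l \<le> h" "j < 3" and b: "b = c l j"
    using carrier_cases[OF \<open>b \<in> P\<close>] by blast
  have above: "lt le (c l j) z" if "z \<in> P" "lt le (c k i) z" for z
    using le_above that assms(3) a b unfolding lt_def by blast
  have below: "lt le z (c l j)" if "z \<in> P" "lt le z (c k i)" for z
    using le_below that assms(4) a b unfolding lt_def by blast
  show False
  proof (cases "k < h")
    case True
    show False
      by (rule no_strict_substitute_below_top[OF True k(2) l]) (use \<open>b \<noteq> a\<close> a b above below in auto)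
  next
    case False
    with k height_pos obtain k0 where "h = Suc k0" "k = h" by (cases h) auto
    then show False
      using no_strict_substitute_in_top_row[of k0 i l j] k l below \<open>b \<noteq> a\<close> a b by blast
  qed
qed

lemma no_retractable_if_nice:
  assumes "nice P le" "a \<in> P"
  shows "\<not> retractable P le a"
  using no_incomparable_substitute substitute_incomparable_if_nice assms
    retractable_iff_substitute by blast

end

theorem proposition3p3:
  fixes P :: "'a set" and le :: "'a \<Rightarrow> 'a \<Rightarrow> bool" and h :: nat and c :: "nat \<Rightarrow> nat \<Rightarrow> 'a"
  assumes "section3 P le h c"
  shows "(nice P le \<longleftrightarrow> (\<forall>a\<in>P. \<not> retractable P le a)) \<and>
         ((\<forall>a\<in>P. \<not> retractable P le a) \<longleftrightarrow> (\<forall>a\<in>P. \<not> irreducible_pt P le a))"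
proof -
  interpret width_three_section P le h c
    using assms by unfold_locales
  show ?thesis
    using no_retractable_if_nice retractable_if_irreducible irreducible_if_not_nice by blast
qed

end
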